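(* Let $f_1,\dots,f_n$ be monotone linear functions and let $\sigma$ be a counterclockwise permutation for them with $f^\sigma(x)=x$ for all $x$. Then $f^\tau(x)=x$ for all $x$ and every counterclockwise permutation $\tau$ for $f_1,\dots,f_n$.
   Context: A linear function is $f(x)=ax+b$; monotone means $a>0$; identical means $f(x)=x$. $\vec f=(b,1-a)^\top$ and $\theta(f)\in[0,2\pi)$ is its polar angle ($\bot$ if $\vec f=0$). For a permutation $\sigma$ of $[n]$, $f^\sigma=f_{\sigma(n)}\circ\cdots\circ f_{\sigma(1)}$. $\sigma$ is counterclockwise if, after discarding positions $i$ with $f_{\sigma(i)}$ identical, there is $k$ such that $\theta(f_{\sigma(k)})\le\cdots\le\theta(f_{\sigma(n)})\le\theta(f_{\sigma(1)})\le\cdots\le\theta(f_{\sigma(k-1)})$. *)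

theory Defs
  imports "HOL-Analysis.Analysis" "HOL-Combinatorics.Permutations"
begin

(* A linear function f(x) = a x + b is represented by the pair (a, b). *)
type_synonym linfun = "real \<times> real"

definition lin_app :: "linfun \<Rightarrow> real \<Rightarrow> real" where
  "lin_app f x = fst f * x + snd f"

definition monotone_lin :: "linfun \<Rightarrow> bool" where
  "monotone_lin f \<longleftrightarrow> fst f > 0"

definition identical_lin :: "linfun \<Rightarrow> bool" where
  "identical_lin f \<longleftrightarrow> (\<forall>x. lin_app f x = x)"

definition fvec :: "linfun \<Rightarrow> complex" where
  "fvec f = Complex (snd f) (1 - fst f)"

(* polar angle in [0, 2 pi) of the vector; only used when fvec f \<noteq> 0 *)
definition theta :: "linfun \<Rightarrow> real" where
  "theta f = (if Arg (fvec f) \<ge> 0 then Arg (fvec f) else Arg (fvec f) + 2 * pi)"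

(* f^sigma restricted to the first k positions: f_{sigma k} o ... o f_{sigma 1} *)
fun comp_perm :: "(nat \<Rightarrow> linfun) \<Rightarrow> (nat \<Rightarrow> nat) \<Rightarrow> nat \<Rightarrow> real \<Rightarrow> real" where
  "comp_perm f \<sigma> 0 = id"
| "comp_perm f \<sigma> (Suc k) = lin_app (f (\<sigma> (Suc k))) \<circ> comp_perm f \<sigma> k"

definition angle_seq :: "(nat \<Rightarrow> linfun) \<Rightarrow> (nat \<Rightarrow> nat) \<Rightarrow> nat \<Rightarrow> real list" where
  "angle_seq f \<sigma> n =
     map (\<lambda>i. theta (f (\<sigma> i))) (filter (\<lambda>i. \<not> identical_lin (f (\<sigma> i))) [1..<Suc n])"

definition counterclockwise :: "(nat \<Rightarrow> linfun) \<Rightarrow> nat \<Rightarrow> (nat \<Rightarrow> nat) \<Rightarrow> bool" where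
  "counterclockwise f n \<sigma> \<longleftrightarrow>
     \<sigma> permutes {1..n} \<and> (\<exists>k. sorted (rotate k (angle_seq f \<sigma> n)))"

end

theory Submission
  imports Defs
begin

text \<open>
  Drop the identical functions; this does not change any composition. Two linear functions
  commute exactly when their vectors are parallel, so functions of equal polar angle commute.
  For counterclockwise \<open>\<sigma>\<close> and \<open>\<tau>\<close>, suitable cyclic rotations of the two remaining
  sequences are both sorted by angle and contain the same functions, so they differ only by
  reordering blocks of equal angle and have the same composition. A cyclic rotation conjugates
  the composition by an invertible map (monotonicity is used only to make every \<open>f\<^sub>i\<close>
  invertible), so it does not affect whether the composition is the identity.
\<close>

fun comp_list :: "('a \<Rightarrow> 'a) list \<Rightarrow> 'a \<Rightarrow> 'a" where
  "comp_list [] = id"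
| "comp_list (g # gs) = comp_list gs \<circ> g"

lemma comp_list_append: "comp_list (xs @ ys) = comp_list ys \<circ> comp_list xs"
  by (induction xs) (auto simp: comp_assoc)

lemma comp_list_snoc_commuting:
  assumes "\<forall>y\<in>set ys. x \<circ> y = y \<circ> x"
  shows "comp_list (ys @ [x]) = comp_list (x # ys)"
  using assms
proof (induction ys)
  case (Cons y ys)
  have "comp_list ((y # ys) @ [x]) = comp_list ys \<circ> (x \<circ> y)"
    using Cons by (simp add: fun_eq_iff)
  also have "\<dots> = comp_list ys \<circ> (y \<circ> x)"
    using Cons.prems by (metis list.set_intros(1))
  finally show ?case by (simp add: comp_assoc)
qed simp

lemma comp_list_eq_if_sorted_mset_eq:
  fixes key :: "'b \<Rightarrow> 'c::linorder" and F :: "'b \<Rightarrow> 'a \<Rightarrow> 'a"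
  assumes "mset X = mset Y" "sorted (map key X)" "sorted (map key Y)"
    and "\<forall>g\<in>set X. \<forall>h\<in>set X. key g = key h \<longrightarrow> F g \<circ> F h = F h \<circ> F g"
  shows "comp_list (map F X) = comp_list (map F Y)"
  using assms
proof (induction X arbitrary: Y)
  case Nil
  then show ?case by simp
next
  case (Cons x X)
  have set_eq: "set (x # X) = set Y"
    using Cons.prems(1) by (metis set_mset_mset)
  then obtain Y1 Y2 where Y: "Y = Y1 @ x # Y2" and "x \<notin> set Y1"
    by (metis list.set_intros(1) split_list_first)
  have commute: "F x \<circ> F y = F y \<circ> F x" if "y \<in> set Y1" for y
  proof -
    have "y \<in> set X"
      using that \<open>x \<notin> set Y1\<close> set_eq Y by auto
    then have "key x \<le> key y"
      using Cons.prems(2) by simp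
    moreover have "key y \<le> key x"
      using Cons.prems(3) that Y by (simp add: sorted_append)
    ultimately show ?thesis
      using Cons.prems(4) \<open>y \<in> set X\<close> by (meson antisym list.set_intros)
  qed
  have "comp_list (map F Y) = comp_list (map F Y2) \<circ> comp_list (map F Y1 @ [F x])"
    using Y comp_list_append[of "map F Y1 @ [F x]" "map F Y2"] by simp
  also have "\<dots> = comp_list (map F Y2) \<circ> comp_list (F x # map F Y1)"
    using commute by (subst comp_list_snoc_commuting) (auto simp del: comp_apply)
  also have "\<dots> = comp_list (map F (Y1 @ Y2)) \<circ> F x"
    by (simp add: comp_list_append comp_assoc)
  also have "comp_list (map F (Y1 @ Y2)) = comp_list (map F X)"
  proof (rule Cons.IH[symmetric])
    show "mset X = mset (Y1 @ Y2)"
      using Cons.prems(1) Y by simp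
    show "sorted (map key X)"
      using Cons.prems(2) by simp
    show "sorted (map key (Y1 @ Y2))"
      using Cons.prems(3) Y by (simp add: sorted_append)
    show "\<forall>g\<in>set X. \<forall>h\<in>set X. key g = key h \<longrightarrow> F g \<circ> F h = F h \<circ> F g"
      using Cons.prems(4) by (meson list.set_intros(2))
  qed
  finally show ?case
    by simp
qed

lemma bij_comp_eq_id_commute:
  assumes "bij g"
  shows "g \<circ> h = id \<longleftrightarrow> h \<circ> g = id"
proof
  assume "g \<circ> h = id"
  then have "inv g \<circ> (g \<circ> h) = inv g"
    by simp
  then have "h = inv g"
    using bij_is_inj[OF assms] by (simp flip: comp_assoc)
  then show "h \<circ> g = id"
    using bij_is_inj[OF assms] by simp
next
  assume "h \<circ> g = id"
  then have "(h \<circ> g) \<circ> inv g = inv g"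
    by simp
  then have "h = inv g"
    using bij_is_surj[OF assms] surj_iff by (metis comp_assoc comp_id)
  then show "g \<circ> h = id"
    using bij_is_surj[OF assms] by (simp flip: surj_iff)
qed

lemma comp_list_rotate1_eq_id_iff:
  assumes "\<forall>g\<in>set gs. bij g"
  shows "comp_list (rotate1 gs) = id \<longleftrightarrow> comp_list gs = id"
proof (cases gs)
  case (Cons g hs)
  have "g \<circ> comp_list hs = id \<longleftrightarrow> comp_list hs \<circ> g = id"
    using assms Cons by (simp add: bij_comp_eq_id_commute)
  then show ?thesis
    using Cons by (simp add: comp_list_append)
qed simp

lemma comp_list_rotate_eq_id_iff:
  assumes "\<forall>g\<in>set gs. bij g"
  shows "comp_list (rotate k gs) = id \<longleftrightarrow> comp_list gs = id"
  using assms by (induction k) (simp_all add: rotate_Suc comp_list_rotate1_eq_id_iff)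

lemma mset_rotate: "mset (rotate k xs) = mset xs"
  unfolding rotate_drop_take by (metis append_take_drop_id mset_append union_commute)

lemma bij_lin_app: "fst g \<noteq> 0 \<Longrightarrow> bij (lin_app g)"
  unfolding bij_def inj_def surj_def lin_app_def
  by (auto simp: field_simps intro!: exI[of _ "(_ - snd g) / fst g"])

lemma lin_app_commute_iff:
  "lin_app g \<circ> lin_app h = lin_app h \<circ> lin_app g \<longleftrightarrow>
     Re (fvec g) * Im (fvec h) = Im (fvec g) * Re (fvec h)"
  by (cases g, cases h) (auto simp: fvec_def lin_app_def fun_eq_iff algebra_simps)

lemma fvec_nonzero: "\<not> identical_lin g \<Longrightarrow> fvec g \<noteq> 0"
  by (cases g) (auto simp: identical_lin_def fvec_def lin_app_def complex_eq_iff)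

lemma theta_eq_imp_Arg_eq: "theta g = theta h \<Longrightarrow> Arg (fvec g) = Arg (fvec h)"
  using Arg_bounded[of "fvec g"] Arg_bounded[of "fvec h"]
  by (auto simp: theta_def split: if_splits)

lemma lin_app_commute_if_theta_eq:
  assumes "\<not> identical_lin g" "\<not> identical_lin h" "theta g = theta h"
  shows "lin_app g \<circ> lin_app h = lin_app h \<circ> lin_app g"
proof -
  let ?z = "fvec g" and ?w = "fvec h"
  have "?z \<noteq> 0" "?w \<noteq> 0"
    using assms fvec_nonzero by auto
  then have "sgn ?z = sgn ?w"
    using Arg_correct theta_eq_imp_Arg_eq[OF assms(3)] by metis
  then have "?z = of_real (cmod ?z / cmod ?w) * ?w"
    using \<open>?z \<noteq> 0\<close> \<open>?w \<noteq> 0\<close> by (simp add: sgn_div_norm scaleR_conv_of_real field_simps)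
  then obtain c where "?z = of_real c * ?w" by blast
  then show ?thesis
    unfolding lin_app_commute_iff by simp
qed

lemma comp_list_id_transfer_sorted_rotations:
  assumes "mset F = mset G"
    and "sorted (rotate k (map theta F))" "sorted (rotate l (map theta G))"
    and "\<forall>g\<in>set F. \<not> identical_lin g \<and> fst g \<noteq> 0"
    and "comp_list (map lin_app F) = id"
  shows "comp_list (map lin_app G) = id"
proof -
  have set_eq: "set F = set G"
    using assms(1) by (metis set_mset_mset)
  have bij: "\<forall>g\<in>set (map lin_app H). bij g" if "set H = set F" for H
    using that assms(4) bij_lin_app by auto
  have "\<forall>g\<in>set (rotate k F). \<forall>h\<in>set (rotate k F).
          theta g = theta h \<longrightarrow> lin_app g \<circ> lin_app h = lin_app h \<circ> lin_app g"
    using assms(4) lin_app_commute_if_theta_eq by simp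
  then have "comp_list (map lin_app (rotate k F)) = comp_list (map lin_app (rotate l G))"
    using assms(1-3)
    by (intro comp_list_eq_if_sorted_mset_eq[where key = theta]) (simp_all add: mset_rotate rotate_map)
  then have "comp_list (rotate k (map lin_app F)) = comp_list (rotate l (map lin_app G))"
    by (simp only: rotate_map)
  moreover have "comp_list (rotate k (map lin_app F)) = id"
    using assms(5) comp_list_rotate_eq_id_iff[OF bij[of F]] by simp
  ultimately have "comp_list (rotate l (map lin_app G)) = id"
    by simp
  then show ?thesis
    using comp_list_rotate_eq_id_iff[OF bij[of G]] set_eq by simp
qed

definition perm_seq :: "(nat \<Rightarrow> linfun) \<Rightarrow> (nat \<Rightarrow> nat) \<Rightarrow> nat \<Rightarrow> linfun list" where
  "perm_seq f \<sigma> n = map (\<lambda>i. f (\<sigma> i)) [1..<Suc n]"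

lemma comp_perm_eq_comp_list: "comp_perm f \<sigma> n = comp_list (map lin_app (perm_seq f \<sigma> n))"
  by (induction n) (auto simp: perm_seq_def comp_list_append)

lemma comp_list_filter_nonidentical:
  "comp_list (map lin_app (filter (\<lambda>g. \<not> identical_lin g) gs)) = comp_list (map lin_app gs)"
  by (induction gs) (auto simp: identical_lin_def fun_eq_iff)

lemma angle_seq_eq: "angle_seq f \<sigma> n = map theta (filter (\<lambda>g. \<not> identical_lin g) (perm_seq f \<sigma> n))"
  by (simp add: angle_seq_def perm_seq_def filter_map o_def)

lemma mset_perm_seq:
  assumes "\<sigma> permutes {1..n}"
  shows "mset (perm_seq f \<sigma> n) = image_mset f (mset_set {1..n})"
proof -
  have "mset (perm_seq f \<sigma> n) = image_mset f (image_mset \<sigma> (mset_set {1..n}))"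
    by (simp add: perm_seq_def multiset.map_comp atLeastLessThanSuc_atLeastAtMost o_def del: upt_Suc)
  also have "image_mset \<sigma> (mset_set {1..n}) = mset_set {1..n}"
    using image_mset_mset_set[OF permutes_inj_on[OF assms]] permutes_image[OF assms] by simp
  finally show ?thesis .
qed

lemma set_perm_seq:
  assumes "\<sigma> permutes {1..n}"
  shows "set (perm_seq f \<sigma> n) = f ` {1..n}"
  using mset_perm_seq[OF assms, of f]
  by (metis finite_atLeastAtMost finite_set_mset_mset_set set_image_mset set_mset_mset)

lemma fst_ne_0_if_in_perm_seq:
  assumes "\<sigma> permutes {1..n}" "\<forall>i\<in>{1..n}. monotone_lin (f i)" "g \<in> set (perm_seq f \<sigma> n)"
  shows "fst g \<noteq> 0"
proof -
  obtain i where "i \<in> {1..n}" "g = f i"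
    using assms(3) set_perm_seq[OF assms(1)] by auto
  then have "monotone_lin g"
    using assms(2) by blast
  then show ?thesis
    by (simp add: monotone_lin_def)
qed

theorem mainTheorem9:
  fixes f :: "nat \<Rightarrow> linfun" and n :: nat and \<sigma> \<tau> :: "nat \<Rightarrow> nat"
  assumes "\<forall>i\<in>{1..n}. monotone_lin (f i)"
    and "counterclockwise f n \<sigma>"
    and "\<forall>x. comp_perm f \<sigma> n x = x"
    and "counterclockwise f n \<tau>"
  shows "\<forall>x. comp_perm f \<tau> n x = x"
proof -
  let ?F = "filter (\<lambda>g. \<not> identical_lin g) (perm_seq f \<sigma> n)"
  let ?G = "filter (\<lambda>g. \<not> identical_lin g) (perm_seq f \<tau> n)"
  have "\<sigma> permutes {1..n}" "\<tau> permutes {1..n}"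
    using assms(2,4) by (simp_all add: counterclockwise_def)
  then have "mset ?F = mset ?G"
    by (simp only: mset_filter mset_perm_seq)
  moreover obtain k l where "sorted (rotate k (map theta ?F))" "sorted (rotate l (map theta ?G))"
    using assms(2,4) by (auto simp: counterclockwise_def angle_seq_eq)
  moreover have "\<forall>g\<in>set ?F. \<not> identical_lin g \<and> fst g \<noteq> 0"
    using fst_ne_0_if_in_perm_seq[OF \<open>\<sigma> permutes {1..n}\<close> assms(1)] by auto
  moreover have "comp_list (map lin_app ?F) = id"
    using assms(3) unfolding comp_list_filter_nonidentical comp_perm_eq_comp_list[symmetric]
    by (simp add: fun_eq_iff)
  ultimately have "comp_list (map lin_app ?G) = id"
    by (rule comp_list_id_transfer_sorted_rotations)
  then have "comp_perm f \<tau> n = id"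
    by (simp only: comp_perm_eq_comp_list comp_list_filter_nonidentical)
  then show ?thesis
    by simp
qed

end
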